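(* Let $t>0$ be an integer. There is a constant $C_t$ such that the following holds. Let $M$ be an $n\times n$ $0$-$1$ matrix for which there do not exist $t$ rows $r_1,\dots,r_t$ and $t$ columns $c_1,\dots,c_t$ such that row $r_i$ and column $c_j$ cross for every $1\le i,j\le t$. Then $M$ has at most $C_t n$ entries equal to $1$.
   Context: In a $0$-$1$ matrix $M$, row $i$ and column $j$ cross if $M_{ij}=1$, or if there exist indices $i_1<i<i_2$ and $j_1<j<j_2$ with $M_{ij_1}=M_{ij_2}=M_{i_1j}=M_{i_2j}=1$. *)

theory Defs
  imports Complex_Main
begin

text \<open>A 0-1 matrix of size n x n is represented by M :: nat \<Rightarrow> nat \<Rightarrow> bool,
  with entries M i j for i < n, j < n (True = 1). Entries outside are ignored.\<close>

definition crosses :: "nat \<Rightarrow> (nat \<Rightarrow> nat \<Rightarrow> bool) \<Rightarrow> nat \<Rightarrow> nat \<Rightarrow> bool" where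
  "crosses n M i j \<longleftrightarrow> M i j \<or>
     (\<exists>i1 i2 j1 j2. i1 < i \<and> i < i2 \<and> i2 < n \<and> j1 < j \<and> j < j2 \<and> j2 < n \<and>
        M i j1 \<and> M i j2 \<and> M i1 j \<and> M i2 j)"

definition ones :: "nat \<Rightarrow> (nat \<Rightarrow> nat \<Rightarrow> bool) \<Rightarrow> nat" where
  "ones n M = card {(i, j). i < n \<and> j < n \<and> M i j}"

end

theory Submission
  imports Defs
begin

text \<open>Replace row i by the horizontal segment from its first to its last 1, and column j by the
  vertical segment from its first to its last 1. Row i and column j cross exactly when these
  segments meet, and every 1 entry is a meeting pair, so it suffices to show: if n horizontal and
  n vertical segments have no K(a+1, t) in their intersection graph, they meet O(n) times.

  This goes by induction on a. For a row h and a column c meeting it, let the next row of (h, c)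
  be the lowest row above h that meets c. Cut every row into maximal runs of consecutive columns
  with the same next row. A crossing of h with c either has no next row (at most one per column)
  or is a crossing of c with a run, and a K(a+1, t) among runs extends by the common next row of its
  highest run to a K(a+2, t) among rows. The runs are linearly many: a run starts at the first
  column of its row, after a column without next row, or where the next row changes, and each
  change is charged to a pair of rows that see each other vertically. There are at most 3 such
  pairs per row: charge each pair to its lower row, its upper row, or the row that blocks their
  view just before they first see each other.\<close>

text \<open>A row segment lies on row pos and spans the columns lo..hi; a column segment lies on
  column pos and spans the rows lo..hi.\<close>

datatype seg = Seg (pos: nat) (lo: nat) (hi: nat)

definition covers :: "seg \<Rightarrow> nat \<Rightarrow> bool" where
  "covers s x \<longleftrightarrow> lo s \<le> x \<and> x \<le> hi s"

definition meets :: "seg \<Rightarrow> seg \<Rightarrow> bool" where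
  "meets r c \<longleftrightarrow> covers r (pos c) \<and> covers c (pos r)"

definition has_biclique :: "nat \<Rightarrow> nat \<Rightarrow> seg set \<Rightarrow> seg set \<Rightarrow> bool" where
  "has_biclique a b R C \<longleftrightarrow>
     (\<exists>R'\<subseteq>R. \<exists>C'\<subseteq>C. card R' = a \<and> card C' = b \<and> (\<forall>r\<in>R'. \<forall>c\<in>C'. meets r c))"

definition crossings :: "seg set \<Rightarrow> seg set \<Rightarrow> nat" where
  "crossings R C = card {(r, c) \<in> R \<times> C. meets r c}"

locale segment_family =
  fixes R C :: "seg set"
  assumes finite_rows: "finite R" and finite_cols: "finite C"
    and rows_disjoint: "\<lbrakk>r1 \<in> R; r2 \<in> R; pos r1 = pos r2; covers r1 x; covers r2 x\<rbrakk> \<Longrightarrow> r1 = r2"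
    and cols_distinct: "\<lbrakk>c1 \<in> C; c2 \<in> C; pos c1 = pos c2\<rbrakk> \<Longrightarrow> c1 = c2"
begin

lemma finite_crossing_pairs: "finite {(r, c) \<in> R \<times> C. meets r c}"
  by (rule finite_subset[of _ "R \<times> C"]) (auto simp: finite_rows finite_cols)

lemma rows_eq_if_meet: "\<lbrakk>r1 \<in> R; r2 \<in> R; meets r1 c; meets r2 c; pos r1 = pos r2\<rbrakk> \<Longrightarrow> r1 = r2"
  using rows_disjoint[of r1 r2 "pos c"] by (simp add: meets_def)

definition next_row :: "seg \<Rightarrow> seg \<Rightarrow> seg option" where
  "next_row h c = (if \<exists>r\<in>R. meets r c \<and> pos h < pos r
     then Some (ARG_MIN pos r. r \<in> R \<and> meets r c \<and> pos h < pos r) else None)"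

lemma next_row_SomeD:
  assumes "next_row h c = Some g"
  shows "g \<in> R" "meets g c" "pos h < pos g"
    and "\<And>r. \<lbrakk>r \<in> R; meets r c; pos h < pos r\<rbrakk> \<Longrightarrow> pos g \<le> pos r"
proof -
  obtain r where "r \<in> R \<and> meets r c \<and> pos h < pos r"
    and g: "g = (ARG_MIN pos r. r \<in> R \<and> meets r c \<and> pos h < pos r)"
    using assms by (auto simp: next_row_def split: if_splits)
  from arg_min_nat_lemma[of "\<lambda>r. r \<in> R \<and> meets r c \<and> pos h < pos r", OF this(1)] g
  show "g \<in> R" "meets g c" "pos h < pos g"
    and "\<And>r. \<lbrakk>r \<in> R; meets r c; pos h < pos r\<rbrakk> \<Longrightarrow> pos g \<le> pos r" by auto
qed

lemma next_row_None_iff: "next_row h c = None \<longleftrightarrow> (\<forall>r\<in>R. meets r c \<longrightarrow> pos r \<le> pos h)"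
  by (auto simp: next_row_def not_less)

definition same_run :: "seg \<Rightarrow> seg \<Rightarrow> seg \<Rightarrow> bool" where
  "same_run h c1 c2 \<longleftrightarrow> (\<forall>c\<in>C. meets h c \<and> min (pos c1) (pos c2) \<le> pos c
     \<and> pos c \<le> max (pos c1) (pos c2) \<longrightarrow> next_row h c = next_row h c1)"

lemma same_run_refl: "c \<in> C \<Longrightarrow> same_run h c c"
  unfolding same_run_def using cols_distinct by (metis le_antisym max.idem min.idem)

lemma same_run_next_row: "\<lbrakk>same_run h c1 c2; c2 \<in> C; meets h c2\<rbrakk> \<Longrightarrow> next_row h c2 = next_row h c1"
  unfolding same_run_def by auto

lemma same_run_sym: "\<lbrakk>same_run h c1 c2; c2 \<in> C; meets h c2\<rbrakk> \<Longrightarrow> same_run h c2 c1"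
  unfolding same_run_def by (simp add: min.commute max.commute)

lemma same_run_trans:
  assumes "same_run h c1 c2" "same_run h c2 c3" "c2 \<in> C" "meets h c2"
  shows "same_run h c1 c3"
  unfolding same_run_def
proof (intro ballI impI)
  fix c assume c: "c \<in> C" "meets h c \<and> min (pos c1) (pos c3) \<le> pos c \<and> pos c \<le> max (pos c1) (pos c3)"
  show "next_row h c = next_row h c1"
  proof (cases "min (pos c1) (pos c2) \<le> pos c \<and> pos c \<le> max (pos c1) (pos c2)")
    case True
    then show ?thesis using assms(1) c unfolding same_run_def by blast
  next
    case False
    then have "min (pos c2) (pos c3) \<le> pos c \<and> pos c \<le> max (pos c2) (pos c3)"
      using c by auto
    then have "next_row h c = next_row h c2"
      using assms(2) c unfolding same_run_def by blast
    then show ?thesis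
      using same_run_next_row[OF assms(1,3,4)] by simp
  qed
qed

definition run_cols :: "seg \<Rightarrow> seg \<Rightarrow> seg set" where
  "run_cols h w = {c \<in> C. meets h c \<and> same_run h c w}"

definition run :: "seg \<Rightarrow> seg \<Rightarrow> seg" where
  "run h w = Seg (pos h) (Min (pos ` run_cols h w)) (Max (pos ` run_cols h w))"

lemma pos_run [simp]: "pos (run h w) = pos h"
  by (simp add: run_def)

lemma finite_run_cols: "finite (run_cols h w)"
  using finite_cols by (simp add: run_cols_def)

context
  fixes h w assumes w: "w \<in> C" "meets h w"
begin

lemma self_in_run_cols: "w \<in> run_cols h w"
  using w by (simp add: run_cols_def same_run_refl)

lemma run_ends:
  obtains c1 c2 where "c1 \<in> run_cols h w" "pos c1 = lo (run h w)"
    and "c2 \<in> run_cols h w" "pos c2 = hi (run h w)"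
proof -
  have "lo (run h w) \<in> pos ` run_cols h w" "hi (run h w) \<in> pos ` run_cols h w"
    using finite_run_cols self_in_run_cols unfolding run_def by (auto intro!: Min_in Max_in)
  then show ?thesis using that by (metis image_iff)
qed

lemma run_covers_col: "covers (run h w) (pos w)"
  using finite_run_cols self_in_run_cols by (simp add: run_def covers_def)

lemma run_within: "lo h \<le> lo (run h w)" "hi (run h w) \<le> hi h"
proof -
  obtain c1 c2 where "c1 \<in> run_cols h w" "pos c1 = lo (run h w)"
    "c2 \<in> run_cols h w" "pos c2 = hi (run h w)" by (rule run_ends)
  then show "lo h \<le> lo (run h w)" "hi (run h w) \<le> hi h"
    by (auto simp: run_cols_def meets_def covers_def)
qed

lemma same_run_if_covered:
  assumes c: "c \<in> C" "meets h c" "covers (run h w) (pos c)"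
  shows "same_run h c w"
proof -
  obtain c1 c2 where c12: "c1 \<in> run_cols h w" "pos c1 = lo (run h w)"
    "c2 \<in> run_cols h w" "pos c2 = hi (run h w)" by (rule run_ends)
  have "same_run h c1 w" "same_run h c2 w"
    using c12 by (simp_all add: run_cols_def)
  then have "same_run h c1 c2"
    using same_run_trans same_run_sym w by blast
  then have on_run: "next_row h d = next_row h c1"
    if "d \<in> C" "meets h d" "covers (run h w) (pos d)" for d
    using that c12 by (simp add: same_run_def covers_def)
  show ?thesis
    unfolding same_run_def
  proof (intro ballI impI)
    fix d assume "d \<in> C" "meets h d \<and> min (pos c) (pos w) \<le> pos d \<and> pos d \<le> max (pos c) (pos w)"
    then have d: "meets h d" "min (pos c) (pos w) \<le> pos d" "pos d \<le> max (pos c) (pos w)" by auto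
    have "covers (run h w) (pos d)"
      using c(3) run_covers_col d(2,3) unfolding covers_def min_def max_def by (auto split: if_splits)
    then show "next_row h d = next_row h c"
      using on_run[OF \<open>d \<in> C\<close> d(1)] on_run[OF c] by simp
  qed
qed

end

lemma meets_run_iff:
  assumes "w \<in> C" "meets h w" "c \<in> C"
  shows "meets (run h w) c \<longleftrightarrow> meets h c \<and> same_run h c w"
proof
  assume m: "meets (run h w) c"
  then have "meets h c"
    using run_within[OF assms(1,2)] by (auto simp: meets_def covers_def)
  with m show "meets h c \<and> same_run h c w"
    using same_run_if_covered[OF assms] by (simp add: meets_def)
next
  assume c: "meets h c \<and> same_run h c w"
  then have "c \<in> run_cols h w" using assms(3) by (simp add: run_cols_def)
  then show "meets (run h w) c"
    using finite_run_cols c by (auto simp: meets_def covers_def run_def)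
qed

lemma run_eq_if_same_run:
  assumes "w \<in> C" "meets h w" "c \<in> C" "meets h c" "same_run h c w"
  shows "run h c = run h w"
proof -
  have "same_run h w c" using same_run_sym assms by blast
  then have "run_cols h c = run_cols h w"
    using assms same_run_trans unfolding run_cols_def by blast
  then show ?thesis by (simp add: run_def)
qed

lemma run_eq_if_overlap:
  assumes "w \<in> C" "meets h w" "w' \<in> C" "meets h w'"
    and "covers (run h w) (lo (run h w'))"
  shows "run h w' = run h w"
proof -
  obtain c where c: "c \<in> run_cols h w'" "pos c = lo (run h w')"
    by (rule run_ends[OF assms(3,4)])
  then have "c \<in> C" "meets h c" "same_run h c w'" by (auto simp: run_cols_def)
  moreover have "same_run h c w"
    using same_run_if_covered[OF assms(1,2) \<open>c \<in> C\<close> \<open>meets h c\<close>] c(2) assms(5) by simp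
  ultimately show ?thesis
    using run_eq_if_same_run assms(1-4) by metis
qed

definition runs :: "seg set" where
  "runs = {run h w | h w. h \<in> R \<and> w \<in> C \<and> meets h w \<and> next_row h w \<noteq> None}"

lemma runs_finite: "finite runs"
proof -
  have "runs \<subseteq> (\<lambda>(h, w). run h w) ` (R \<times> C)" by (auto simp: runs_def)
  then show ?thesis using finite_rows finite_cols finite_subset by blast
qed

lemma runs_disjoint:
  assumes "r1 \<in> runs" "r2 \<in> runs" "pos r1 = pos r2" "covers r1 x" "covers r2 x"
  shows "r1 = r2"
proof -
  obtain h1 w1 where 1: "r1 = run h1 w1" "h1 \<in> R" "w1 \<in> C" "meets h1 w1"
    using assms(1) by (auto simp: runs_def)
  obtain h2 w2 where 2: "r2 = run h2 w2" "h2 \<in> R" "w2 \<in> C" "meets h2 w2"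
    using assms(2) by (auto simp: runs_def)
  have "covers h1 x" "covers h2 x"
    using run_within[OF 1(3,4)] run_within[OF 2(3,4)] assms(4,5) 1(1) 2(1) by (auto simp: covers_def)
  then have "h1 = h2" using rows_disjoint 1 2 assms(3) by simp
  moreover have "covers r1 (lo r2) \<or> covers r2 (lo r1)"
    using assms(4,5) by (auto simp: covers_def)
  ultimately show ?thesis
    using run_eq_if_overlap 1 2 by metis
qed

lemma segment_family_runs: "segment_family runs C"
  by unfold_locales (use runs_finite finite_cols runs_disjoint cols_distinct in auto)

lemma top_row_unique:
  assumes "h1 \<in> R" "h2 \<in> R" "meets h1 c" "meets h2 c" "next_row h1 c = None" "next_row h2 c = None"
  shows "h1 = h2"
  using assms rows_eq_if_meet[of h1 h2 c] by (simp add: next_row_None_iff) (meson le_antisym)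

lemma card_top_crossings_le: "card {(h, c) \<in> R \<times> C. meets h c \<and> next_row h c = None} \<le> card C"
proof (rule card_inj_on_le[OF _ _ finite_cols])
  show "inj_on snd {(h, c) \<in> R \<times> C. meets h c \<and> next_row h c = None}"
  proof (rule inj_onI, clarsimp)
    fix h1 h2 c
    assume "h1 \<in> R" "h2 \<in> R" "meets h1 c" "meets h2 c" "next_row h1 c = None" "next_row h2 c = None"
    then show "h1 = h2" by (rule top_row_unique)
  qed
qed auto

lemma crossings_le_runs: "crossings R C \<le> card C + crossings runs C"
proof -
  let ?top = "{(h, c) \<in> R \<times> C. meets h c \<and> next_row h c = None}"
  let ?low = "{(h, c) \<in> R \<times> C. meets h c \<and> next_row h c \<noteq> None}"
  let ?f = "\<lambda>(h, c). (run h c, c)"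
  have "inj_on ?f ?low"
    by (rule inj_onI) (clarsimp, metis pos_run rows_eq_if_meet)
  moreover have "?f ` ?low \<subseteq> {(r, c) \<in> runs \<times> C. meets r c}"
    using meets_run_iff same_run_refl by (auto simp: runs_def)
  ultimately have "card ?low \<le> crossings runs C"
    unfolding crossings_def
    using card_inj_on_le segment_family.finite_crossing_pairs[OF segment_family_runs] by blast
  moreover have "{(r, c) \<in> R \<times> C. meets r c} = ?top \<union> ?low" by auto
  then have "crossings R C \<le> card ?top + card ?low"
    unfolding crossings_def using card_Un_le by simp
  ultimately show ?thesis using card_top_crossings_le by linarith
qed

lemma meets_next_row_of_run:
  assumes "w \<in> C" "meets h w" "next_row h w = Some g" "c \<in> C" "meets (run h w) c"
  shows "meets g c"
proof -
  have "meets h c" "same_run h c w" using meets_run_iff assms(1,2,4,5) by auto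
  then have "next_row h c = Some g"
    using same_run_next_row assms(1-4) by metis
  then show ?thesis by (rule next_row_SomeD)
qed

lemma row_below_run: "r \<in> runs \<Longrightarrow> \<exists>h\<in>R. pos h = pos r \<and> (\<forall>c\<in>C. meets r c \<longrightarrow> meets h c)"
  using meets_run_iff unfolding runs_def by fastforce

lemma rows_below_runs:
  assumes "R' \<subseteq> runs" "\<forall>r\<in>R'. meets r c0"
  obtains f where "inj_on f R'"
    and "\<And>r. r \<in> R' \<Longrightarrow> f r \<in> R \<and> pos (f r) = pos r \<and> (\<forall>c\<in>C. meets r c \<longrightarrow> meets (f r) c)"
proof -
  have "\<forall>r\<in>R'. \<exists>h. h \<in> R \<and> pos h = pos r \<and> (\<forall>c\<in>C. meets r c \<longrightarrow> meets h c)"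
    using row_below_run assms(1) by blast
  from bchoice[OF this] obtain f
    where f: "\<And>r. r \<in> R' \<Longrightarrow> f r \<in> R \<and> pos (f r) = pos r \<and> (\<forall>c\<in>C. meets r c \<longrightarrow> meets (f r) c)"
    by blast
  have "inj_on f R'"
  proof (rule inj_onI)
    fix r1 r2 assume r: "r1 \<in> R'" "r2 \<in> R'" "f r1 = f r2"
    then have "pos r1 = pos r2" using f[of r1] f[of r2] by metis
    moreover have "covers r1 (pos c0)" "covers r2 (pos c0)"
      using assms(2) r by (auto simp: meets_def)
    ultimately show "r1 = r2" using runs_disjoint[of r1 r2 "pos c0"] r(1,2) assms(1) by auto
  qed
  then show ?thesis using f that by blast
qed

lemma biclique_from_runs:
  assumes "has_biclique (Suc a) b runs C" "0 < b"
  shows "has_biclique (Suc (Suc a)) b R C"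
proof -
  obtain R' C' where R': "R' \<subseteq> runs" "card R' = Suc a" and C': "C' \<subseteq> C" "card C' = b"
    and complete: "\<forall>r\<in>R'. \<forall>c\<in>C'. meets r c"
    using assms(1) by (auto simp: has_biclique_def)
  have "finite R'" "R' \<noteq> {}" using R'(2) card.infinite by force+
  then have "Max (pos ` R') \<in> pos ` R'" by simp
  then obtain top where top: "top \<in> R'" "pos top = Max (pos ` R')" by auto
  obtain h w g where hw: "top = run h w" "w \<in> C" "meets h w" "next_row h w = Some g"
    using top(1) R'(1) by (auto simp: runs_def)
  have g: "g \<in> R" "pos h < pos g" "\<forall>c\<in>C'. meets g c"
    using next_row_SomeD[OF hw(4)] meets_next_row_of_run[OF hw(2-4)] complete top(1) hw(1) C'(1)
    by auto
  obtain c0 where "c0 \<in> C'" using C'(2) assms(2) by fastforce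
  then obtain f where f: "inj_on f R'"
    "\<And>r. r \<in> R' \<Longrightarrow> f r \<in> R \<and> pos (f r) = pos r \<and> (\<forall>c\<in>C. meets r c \<longrightarrow> meets (f r) c)"
    using rows_below_runs[OF R'(1)] complete by blast
  have "g \<notin> f ` R'"
  proof
    assume "g \<in> f ` R'"
    then obtain r where "r \<in> R'" "pos g = pos r" using f(2) by force
    moreover have "pos r \<le> pos top" using \<open>r \<in> R'\<close> top(2) \<open>finite R'\<close> by simp
    ultimately show False using hw(1) g(2) by simp
  qed
  then have "card (insert g (f ` R')) = Suc (Suc a)"
    using f(1) R'(2) \<open>finite R'\<close> by (simp add: card_image)
  moreover have "insert g (f ` R') \<subseteq> R" using g(1) f(2) by auto
  moreover have "\<forall>r\<in>insert g (f ` R'). \<forall>c\<in>C'. meets r c"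
    using g(3) f(2) complete C'(1) by auto
  ultimately show ?thesis
    unfolding has_biclique_def using C' by blast
qed

definition sees :: "seg \<Rightarrow> seg \<Rightarrow> nat \<Rightarrow> bool" where
  "sees h g x \<longleftrightarrow> covers h x \<and> covers g x \<and> \<not> (\<exists>r\<in>R. covers r x \<and> pos h < pos r \<and> pos r < pos g)"

definition visible :: "(seg \<times> seg) set" where
  "visible = {(h, g). h \<in> R \<and> (\<exists>c\<in>C. meets h c \<and> next_row h c = Some g)}"

lemma sees_next_row:
  assumes "meets h c" "next_row h c = Some g"
  shows "sees h g (pos c)"
proof -
  note g = next_row_SomeD[OF assms(2)]
  have "pos g \<le> pos r" if "r \<in> R" "covers r (pos c)" "pos h < pos r" "pos r < pos g" for r
  proof -
    have "meets r c" using that(2,3,4) assms(1) g(2) by (auto simp: meets_def covers_def)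
    then show ?thesis using g(4) that(1,3) by blast
  qed
  then show ?thesis using assms(1) g(2) by (force simp: sees_def meets_def)
qed

lemma sees_unique_above:
  assumes "g1 \<in> R" "g2 \<in> R" "sees h g1 x" "sees h g2 x" "pos h < pos g1" "pos h < pos g2"
  shows "g1 = g2"
proof -
  have "\<not> pos g1 < pos g2" "\<not> pos g2 < pos g1" using assms unfolding sees_def by blast+
  then show ?thesis using rows_disjoint assms(1-4) unfolding sees_def by (metis nat_neq_iff)
qed

lemma sees_unique_below:
  assumes "h1 \<in> R" "h2 \<in> R" "sees h1 g x" "sees h2 g x" "pos h1 < pos g" "pos h2 < pos g"
  shows "h1 = h2"
proof -
  have "\<not> pos h1 < pos h2" "\<not> pos h2 < pos h1" using assms unfolding sees_def by blast+
  then show ?thesis using rows_disjoint assms(1-4) unfolding sees_def by (metis nat_neq_iff)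
qed

definition first_sight :: "seg \<Rightarrow> seg \<Rightarrow> nat" where
  "first_sight h g = (LEAST x. sees h g x)"

lemma visibleD:
  assumes "(h, g) \<in> visible"
  shows "h \<in> R" "g \<in> R" "pos h < pos g" "sees h g (first_sight h g)"
    and "\<And>x. x < first_sight h g \<Longrightarrow> \<not> sees h g x"
proof -
  obtain c where c: "h \<in> R" "meets h c" "next_row h c = Some g"
    using assms by (auto simp: visible_def)
  then show "h \<in> R" "g \<in> R" "pos h < pos g" using next_row_SomeD by auto
  have "sees h g (pos c)" using sees_next_row c by blast
  then show "sees h g (first_sight h g)" unfolding first_sight_def by (rule LeastI)
  show "\<And>x. x < first_sight h g \<Longrightarrow> \<not> sees h g x"
    unfolding first_sight_def by (rule not_less_Least)
qed

text \<open>If neither end of h or g is where they first see each other, then just before that point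
  the lowest row between them blocks the view, and it ends there.\<close>

definition blocker :: "seg \<Rightarrow> seg \<Rightarrow> seg" where
  "blocker h g = (ARG_MIN pos k. k \<in> R \<and> covers k (first_sight h g - 1) \<and> pos h < pos k \<and> pos k < pos g)"

lemma blockerD:
  assumes "(h, g) \<in> visible" "first_sight h g \<noteq> lo h" "first_sight h g \<noteq> lo g"
  defines "x \<equiv> first_sight h g"
  shows "blocker h g \<in> R" "pos h < pos (blocker h g)" "pos (blocker h g) < pos g"
    and "\<And>r. \<lbrakk>r \<in> R; covers r (x - 1); pos h < pos r; pos r < pos g\<rbrakk> \<Longrightarrow> pos (blocker h g) \<le> pos r"
    and "x = Suc (hi (blocker h g))" "covers h (x - 1)"
proof -
  note V = visibleD[OF assms(1)]
  have "lo h < x" "lo g < x" using V(4) assms(2,3) unfolding x_def sees_def covers_def by auto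
  then have covers_before: "covers h (x - 1)" "covers g (x - 1)"
    using V(4) unfolding x_def sees_def covers_def by auto
  then show "covers h (x - 1)" by simp
  have "\<not> sees h g (x - 1)" using V(5) \<open>lo h < x\<close> unfolding x_def by simp
  then obtain k where "k \<in> R \<and> covers k (x - 1) \<and> pos h < pos k \<and> pos k < pos g"
    using covers_before unfolding sees_def by blast
  from arg_min_nat_lemma[of "\<lambda>k. k \<in> R \<and> covers k (x - 1) \<and> pos h < pos k \<and> pos k < pos g", OF this]
  have k: "blocker h g \<in> R" "covers (blocker h g) (x - 1)"
    "pos h < pos (blocker h g)" "pos (blocker h g) < pos g"
    "\<And>r. \<lbrakk>r \<in> R; covers r (x - 1); pos h < pos r; pos r < pos g\<rbrakk> \<Longrightarrow> pos (blocker h g) \<le> pos r"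
    unfolding blocker_def x_def by auto
  then show "blocker h g \<in> R" "pos h < pos (blocker h g)" "pos (blocker h g) < pos g"
    and "\<And>r. \<lbrakk>r \<in> R; covers r (x - 1); pos h < pos r; pos r < pos g\<rbrakk> \<Longrightarrow> pos (blocker h g) \<le> pos r"
    by auto
  have "\<not> covers (blocker h g) x" using V(4) k(1,3,4) unfolding x_def sees_def by blast
  then show "x = Suc (hi (blocker h g))" using k(2) \<open>lo h < x\<close> unfolding covers_def by auto
qed

lemma card_visible_from_lower_end: "card {(h, g) \<in> visible. first_sight h g = lo h} \<le> card R"
proof (rule card_inj_on_le[OF _ _ finite_rows])
  show "inj_on fst {(h, g) \<in> visible. first_sight h g = lo h}"
  proof (rule inj_onI, clarsimp)
    fix h g1 g2
    assume "(h, g1) \<in> visible" "(h, g2) \<in> visible" "first_sight h g1 = lo h" "first_sight h g2 = lo h"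
    then show "g1 = g2" using visibleD sees_unique_above by metis
  qed
  show "fst ` {(h, g) \<in> visible. first_sight h g = lo h} \<subseteq> R" using visibleD by force
qed

lemma card_visible_from_upper_end: "card {(h, g) \<in> visible. first_sight h g = lo g} \<le> card R"
proof (rule card_inj_on_le[OF _ _ finite_rows])
  show "inj_on snd {(h, g) \<in> visible. first_sight h g = lo g}"
  proof (rule inj_onI, clarsimp)
    fix h1 h2 g
    assume "(h1, g) \<in> visible" "(h2, g) \<in> visible" "first_sight h1 g = lo g" "first_sight h2 g = lo g"
    then show "h1 = h2" using visibleD sees_unique_below by metis
  qed
  show "snd ` {(h, g) \<in> visible. first_sight h g = lo g} \<subseteq> R" using visibleD by force
qed

lemma card_visible_blocked:
  "card {(h, g) \<in> visible. first_sight h g \<noteq> lo h \<and> first_sight h g \<noteq> lo g} \<le> card R"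
proof (rule card_inj_on_le[OF _ _ finite_rows])
  show "inj_on (\<lambda>(h, g). blocker h g) {(h, g) \<in> visible. first_sight h g \<noteq> lo h \<and> first_sight h g \<noteq> lo g}"
  proof (rule inj_onI, clarsimp)
    fix h1 g1 h2 g2
    assume 1: "(h1, g1) \<in> visible" "first_sight h1 g1 \<noteq> lo h1" "first_sight h1 g1 \<noteq> lo g1"
      and 2: "(h2, g2) \<in> visible" "first_sight h2 g2 \<noteq> lo h2" "first_sight h2 g2 \<noteq> lo g2"
      and k: "blocker h1 g1 = blocker h2 g2"
    note B1 = blockerD[OF 1] and B2 = blockerD[OF 2]
    note V1 = visibleD[OF 1(1)] and V2 = visibleD[OF 2(1)]
    txt \<open>Each of h1, h2 is the highest row below the blocker covering x - 1.\<close>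
    define x where "x = first_sight h1 g1"
    have x2: "first_sight h2 g2 = x" using B1(5) B2(5) k x_def by simp
    have "\<not> pos h1 < pos h2"
      using B1(4)[OF V2(1)] B1(3) B2(2,6) x2 k x_def by fastforce
    moreover have "\<not> pos h2 < pos h1"
      using B2(4)[OF V1(1)] B2(3) B1(2,6) x2 k x_def by fastforce
    ultimately have "h1 = h2"
      using rows_disjoint[OF V1(1) V2(1)] B1(6) B2(6) x2 x_def by (metis nat_neq_iff)
    then show "h1 = h2 \<and> g1 = g2"
      using sees_unique_above V1 V2 x2 x_def by metis
  qed
  show "(\<lambda>(h, g). blocker h g) ` {(h, g) \<in> visible. first_sight h g \<noteq> lo h \<and> first_sight h g \<noteq> lo g} \<subseteq> R"
    using blockerD(1) by auto
qed

lemma card_visible_le: "card visible \<le> 3 * card R"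
proof -
  let ?lower = "{(h, g) \<in> visible. first_sight h g = lo h}"
  let ?upper = "{(h, g) \<in> visible. first_sight h g = lo g}"
  let ?blocked = "{(h, g) \<in> visible. first_sight h g \<noteq> lo h \<and> first_sight h g \<noteq> lo g}"
  have "visible = ?lower \<union> ?upper \<union> ?blocked" by auto
  then have "card visible = card (?lower \<union> ?upper \<union> ?blocked)" by (rule arg_cong)
  moreover have "card (?lower \<union> ?upper \<union> ?blocked) \<le> card ?lower + card ?upper + card ?blocked"
    by (meson card_Un_le add_le_mono order_trans le_refl)
  ultimately show ?thesis
    using card_visible_from_lower_end card_visible_from_upper_end card_visible_blocked by linarith
qed

definition has_prev_col :: "seg \<Rightarrow> seg \<Rightarrow> bool" where
  "has_prev_col h c \<longleftrightarrow> (\<exists>c'\<in>C. meets h c' \<and> pos c' < pos c)"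

definition prev_col :: "seg \<Rightarrow> seg \<Rightarrow> seg" where
  "prev_col h c = (ARG_MAX pos c'. c' \<in> C \<and> meets h c' \<and> pos c' < pos c)"

lemma prev_colD:
  assumes "has_prev_col h c"
  shows "prev_col h c \<in> C" "meets h (prev_col h c)" "pos (prev_col h c) < pos c"
    and "\<And>c'. \<lbrakk>c' \<in> C; meets h c'; pos c' < pos c\<rbrakk> \<Longrightarrow> pos c' \<le> pos (prev_col h c)"
proof -
  obtain c' where "c' \<in> C \<and> meets h c' \<and> pos c' < pos c"
    using assms by (auto simp: has_prev_col_def)
  from arg_max_nat_lemma[of "\<lambda>c'. c' \<in> C \<and> meets h c' \<and> pos c' < pos c", OF this]
  show "prev_col h c \<in> C" "meets h (prev_col h c)" "pos (prev_col h c) < pos c"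
    and "\<And>c'. \<lbrakk>c' \<in> C; meets h c'; pos c' < pos c\<rbrakk> \<Longrightarrow> pos c' \<le> pos (prev_col h c)"
    unfolding prev_col_def by auto
qed

lemma col_eq_if_same_threshold:
  assumes "c1 \<in> C" "meets h c1" "has_prev_col h c1" "pos (prev_col h c1) < v" "v \<le> pos c1"
    and "c2 \<in> C" "meets h c2" "has_prev_col h c2" "pos (prev_col h c2) < v" "v \<le> pos c2"
  shows "c1 = c2"
proof -
  have "\<not> pos c1 < pos c2" using prev_colD(4)[OF assms(8,1,2)] assms(4,5,9) by fastforce
  moreover have "\<not> pos c2 < pos c1" using prev_colD(4)[OF assms(3,6,7)] assms(4,9,10) by fastforce
  ultimately show ?thesis using cols_distinct assms(1,6) by (metis nat_neq_iff)
qed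

definition run_starts :: "(seg \<times> seg) set" where
  "run_starts = {(h, c). h \<in> R \<and> c \<in> C \<and> meets h c \<and> next_row h c \<noteq> None
     \<and> \<not> (\<exists>c'\<in>C. meets h c' \<and> pos c' < pos c \<and> same_run h c' c)}"

lemma run_startsD:
  "(h, c) \<in> run_starts \<Longrightarrow> h \<in> R \<and> c \<in> C \<and> meets h c \<and> next_row h c \<noteq> None"
  by (simp add: run_starts_def)

lemma finite_run_starts: "finite run_starts"
  by (rule finite_subset[of _ "R \<times> C"]) (auto simp: run_starts_def finite_rows finite_cols)

lemma runs_subset_run_starts: "runs \<subseteq> (\<lambda>(h, c). run h c) ` run_starts"
proof
  fix r assume "r \<in> runs"
  then obtain h w where hw: "r = run h w" "h \<in> R" "w \<in> C" "meets h w" "next_row h w \<noteq> None"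
    by (auto simp: runs_def)
  obtain c where c: "c \<in> run_cols h w" "pos c = lo (run h w)" by (rule run_ends[OF hw(3,4)])
  then have c_run: "c \<in> C" "meets h c" "same_run h c w" by (auto simp: run_cols_def)
  have "\<not> (\<exists>c'\<in>C. meets h c' \<and> pos c' < pos c \<and> same_run h c' c)"
  proof
    assume "\<exists>c'\<in>C. meets h c' \<and> pos c' < pos c \<and> same_run h c' c"
    then obtain c' where c': "c' \<in> C" "meets h c'" "pos c' < pos c" "same_run h c' c" by blast
    then have "c' \<in> run_cols h w"
      using same_run_trans[OF c'(4) c_run(3,1,2)] by (simp add: run_cols_def)
    then have "lo (run h w) \<le> pos c'"
      using finite_run_cols by (simp add: run_def)
    then show False using c(2) c'(3) by simp
  qed
  moreover have "next_row h c = next_row h w" using same_run_next_row[OF c_run(3) hw(3,4)] by simp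
  ultimately have "(h, c) \<in> run_starts" using hw c_run by (simp add: run_starts_def)
  moreover have "run h c = r" using run_eq_if_same_run[OF hw(3,4) c_run] hw(1) by simp
  ultimately show "r \<in> (\<lambda>(h, c). run h c) ` run_starts" by force
qed

lemma next_row_changes_at_run_start:
  assumes "(h, c) \<in> run_starts" "has_prev_col h c"
  shows "next_row h (prev_col h c) \<noteq> next_row h c"
proof
  assume eq: "next_row h (prev_col h c) = next_row h c"
  note p = prev_colD[OF assms(2)]
  have c: "c \<in> C" "meets h c" using run_startsD[OF assms(1)] by auto
  have "same_run h (prev_col h c) c"
    unfolding same_run_def
  proof (intro ballI impI)
    fix d assume "d \<in> C"
      and d: "meets h d \<and> min (pos (prev_col h c)) (pos c) \<le> pos d \<and> pos d \<le> max (pos (prev_col h c)) (pos c)"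
    then have "d = prev_col h c \<or> d = c"
      using p c cols_distinct[of d] by (metis le_antisym linorder_not_le max.absorb2 min.absorb1 order_less_imp_le)
    then show "next_row h d = next_row h (prev_col h c)" using eq by auto
  qed
  then show False using assms(1) p(1-3) by (auto simp: run_starts_def)
qed

lemma prev_col_left_of_next_row:
  assumes "(h, c) \<in> run_starts" "has_prev_col h c"
    and "next_row h c = Some g" "next_row h (prev_col h c) = Some g'" "pos g \<le> pos g'"
  shows "pos (prev_col h c) < lo g"
proof (rule ccontr)
  assume "\<not> pos (prev_col h c) < lo g"
  note p = prev_colD[OF assms(2)] and G = next_row_SomeD[OF assms(3)] and G' = next_row_SomeD[OF assms(4)]
  have "meets g (prev_col h c)"
    using \<open>\<not> _ < lo g\<close> p(2,3) G(2,3) G'(2) assms(5) by (auto simp: meets_def covers_def)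
  then have "g = g'"
    using G'(4)[OF G(1) _ G(3)] assms(5) rows_eq_if_meet[OF G(1) G'(1) _ G'(2)] by simp
  then show False using next_row_changes_at_run_start[OF assms(1,2)] assms(3,4) by simp
qed

lemma next_row_of_prev_col_ends_before:
  assumes "(h, c) \<in> run_starts" "has_prev_col h c"
    and "next_row h c = Some g" "next_row h (prev_col h c) = Some g'" "pos g' < pos g"
  shows "hi g' < pos c"
proof (rule ccontr)
  assume "\<not> hi g' < pos c"
  note p = prev_colD[OF assms(2)] and G = next_row_SomeD[OF assms(3)] and G' = next_row_SomeD[OF assms(4)]
  have "meets g' c"
    using \<open>\<not> hi g' < pos c\<close> p(3) G'(2,3) G(2) run_startsD[OF assms(1)] assms(5)
    by (auto simp: meets_def covers_def)
  then show False using G(4)[OF G'(1) _ G'(3)] assms(5) by simp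
qed

lemma card_run_starts_first_le: "card {(h, c) \<in> run_starts. \<not> has_prev_col h c} \<le> card R"
proof (rule card_inj_on_le[OF _ _ finite_rows])
  show "inj_on fst {(h, c) \<in> run_starts. \<not> has_prev_col h c}"
  proof (rule inj_onI, clarsimp)
    fix h c1 c2
    assume "(h, c1) \<in> run_starts" "\<not> has_prev_col h c1" "(h, c2) \<in> run_starts" "\<not> has_prev_col h c2"
    then show "c1 = c2"
      using run_startsD cols_distinct unfolding has_prev_col_def by (metis nat_neq_iff)
  qed
qed (auto simp: run_starts_def)

lemma card_run_starts_prev_top_le:
  "card {(h, c) \<in> run_starts. has_prev_col h c \<and> next_row h (prev_col h c) = None} \<le> card C"
proof (rule card_inj_on_le[OF _ _ finite_cols])
  show "inj_on (\<lambda>(h, c). prev_col h c)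
      {(h, c) \<in> run_starts. has_prev_col h c \<and> next_row h (prev_col h c) = None}"
  proof (rule inj_onI, clarsimp)
    fix h1 c1 h2 c2
    assume p: "prev_col h1 c1 = prev_col h2 c2"
      and 1: "(h1, c1) \<in> run_starts" "has_prev_col h1 c1" "next_row h1 (prev_col h2 c2) = None"
      and 2: "(h2, c2) \<in> run_starts" "has_prev_col h2 c2" "next_row h2 (prev_col h2 c2) = None"
    note P1 = prev_colD[OF 1(2)] and P2 = prev_colD[OF 2(2)]
    have "h1 = h2"
      using top_row_unique run_startsD[OF 1(1)] run_startsD[OF 2(1)] P1(2) P2(2) 1(3) 2(3) p by metis
    then show "h1 = h2 \<and> c1 = c2"
      using col_eq_if_same_threshold[of c1 h1 "Suc (pos (prev_col h1 c1))" c2]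
        run_startsD[OF 1(1)] run_startsD[OF 2(1)] 1(2) 2(2) P1(3) P2(3) p by simp
  qed
qed (auto dest: prev_colD)

lemma card_run_starts_next_lower_le:
  "card {(h, c) \<in> run_starts. has_prev_col h c \<and> (\<exists>g g'. next_row h c = Some g
      \<and> next_row h (prev_col h c) = Some g' \<and> pos g \<le> pos g')} \<le> card visible"
proof (rule card_inj_on_le)
  show "inj_on (\<lambda>(h, c). (h, the (next_row h c))) {(h, c) \<in> run_starts. has_prev_col h c \<and>
      (\<exists>g g'. next_row h c = Some g \<and> next_row h (prev_col h c) = Some g' \<and> pos g \<le> pos g')}"
  proof (rule inj_onI, clarsimp)
    fix h c1 c2 g g1' g2'
    assume 1: "(h, c1) \<in> run_starts" "has_prev_col h c1" "next_row h c1 = Some g"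
        "next_row h (prev_col h c1) = Some g1'" "pos g \<le> pos g1'"
      and 2: "(h, c2) \<in> run_starts" "has_prev_col h c2" "next_row h c2 = Some g"
        "next_row h (prev_col h c2) = Some g2'" "pos g \<le> pos g2'"
    have "lo g \<le> pos c1" "lo g \<le> pos c2"
      using next_row_SomeD(2)[OF 1(3)] next_row_SomeD(2)[OF 2(3)] by (auto simp: meets_def covers_def)
    then show "c1 = c2"
      using col_eq_if_same_threshold[of c1 h "lo g" c2] run_startsD[OF 1(1)] run_startsD[OF 2(1)]
        1(2) 2(2) prev_col_left_of_next_row[OF 1] prev_col_left_of_next_row[OF 2] by simp
  qed
  show "(\<lambda>(h, c). (h, the (next_row h c))) ` {(h, c) \<in> run_starts. has_prev_col h c \<and>
      (\<exists>g g'. next_row h c = Some g \<and> next_row h (prev_col h c) = Some g' \<and> pos g \<le> pos g')}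
      \<subseteq> visible"
    by (auto simp: visible_def run_starts_def)
  show "finite visible"
    by (rule finite_subset[of _ "R \<times> R"]) (auto simp: visible_def finite_rows dest: next_row_SomeD)
qed

lemma card_run_starts_next_higher_le:
  "card {(h, c) \<in> run_starts. has_prev_col h c \<and> (\<exists>g g'. next_row h c = Some g
      \<and> next_row h (prev_col h c) = Some g' \<and> pos g' < pos g)} \<le> card visible"
proof (rule card_inj_on_le)
  show "inj_on (\<lambda>(h, c). (h, the (next_row h (prev_col h c)))) {(h, c) \<in> run_starts. has_prev_col h c \<and>
      (\<exists>g g'. next_row h c = Some g \<and> next_row h (prev_col h c) = Some g' \<and> pos g' < pos g)}"
  proof (rule inj_onI, clarsimp)
    fix h c1 c2 g1 g2 g'
    assume 1: "(h, c1) \<in> run_starts" "has_prev_col h c1" "next_row h c1 = Some g1"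
        "next_row h (prev_col h c1) = Some g'" "pos g' < pos g1"
      and 2: "(h, c2) \<in> run_starts" "has_prev_col h c2" "next_row h c2 = Some g2"
        "next_row h (prev_col h c2) = Some g'" "pos g' < pos g2"
    have "pos (prev_col h c1) \<le> hi g'" "pos (prev_col h c2) \<le> hi g'"
      using next_row_SomeD(2)[OF 1(4)] next_row_SomeD(2)[OF 2(4)] by (auto simp: meets_def covers_def)
    then show "c1 = c2"
      using col_eq_if_same_threshold[of c1 h "Suc (hi g')" c2] run_startsD[OF 1(1)] run_startsD[OF 2(1)]
        1(2) 2(2) next_row_of_prev_col_ends_before[OF 1] next_row_of_prev_col_ends_before[OF 2] by simp
  qed
  show "(\<lambda>(h, c). (h, the (next_row h (prev_col h c)))) ` {(h, c) \<in> run_starts. has_prev_col h c \<and>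
      (\<exists>g g'. next_row h c = Some g \<and> next_row h (prev_col h c) = Some g' \<and> pos g' < pos g)}
      \<subseteq> visible"
    by (auto simp: visible_def run_starts_def dest: prev_colD)
  show "finite visible"
    by (rule finite_subset[of _ "R \<times> R"]) (auto simp: visible_def finite_rows dest: next_row_SomeD)
qed

lemma card_run_starts_le: "card run_starts \<le> card R + card C + 2 * card visible"
proof -
  let ?first = "{(h, c) \<in> run_starts. \<not> has_prev_col h c}"
  let ?prev_top = "{(h, c) \<in> run_starts. has_prev_col h c \<and> next_row h (prev_col h c) = None}"
  let ?lower = "{(h, c) \<in> run_starts. has_prev_col h c \<and> (\<exists>g g'. next_row h c = Some g
      \<and> next_row h (prev_col h c) = Some g' \<and> pos g \<le> pos g')}"
  let ?higher = "{(h, c) \<in> run_starts. has_prev_col h c \<and> (\<exists>g g'. next_row h c = Some g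
      \<and> next_row h (prev_col h c) = Some g' \<and> pos g' < pos g)}"
  have "run_starts = ?first \<union> ?prev_top \<union> ?lower \<union> ?higher"
    by (auto simp: run_starts_def not_le)
  then have "card run_starts = card (?first \<union> ?prev_top \<union> ?lower \<union> ?higher)"
    by (rule arg_cong)
  moreover have "card (?first \<union> ?prev_top \<union> ?lower \<union> ?higher)
      \<le> card ?first + card ?prev_top + card ?lower + card ?higher"
    by (meson card_Un_le add_le_mono order_trans le_refl)
  ultimately show ?thesis
    using card_run_starts_first_le card_run_starts_prev_top_le
      card_run_starts_next_lower_le card_run_starts_next_higher_le by linarith
qed

lemma card_runs_le: "card runs \<le> 7 * card R + card C"
proof -
  have "card runs \<le> card ((\<lambda>(h, c). run h c) ` run_starts)"
    using runs_subset_run_starts finite_run_starts by (intro card_mono) auto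
  also have "\<dots> \<le> card run_starts" using finite_run_starts by (rule card_image_le)
  finally show ?thesis using card_run_starts_le card_visible_le by linarith
qed

end

lemma crossings_le_if_no_star:
  assumes "segment_family R C" "\<not> has_biclique 1 t R C"
  shows "crossings R C \<le> t * card R"
proof -
  interpret segment_family R C by fact
  have degree: "card {c \<in> C. meets r c} \<le> t" if "r \<in> R" for r
  proof (rule ccontr)
    assume "\<not> card {c \<in> C. meets r c} \<le> t"
    then obtain C' where "C' \<subseteq> {c \<in> C. meets r c}" "card C' = t"
      by (meson obtain_subset_with_card_n not_le order_less_imp_le)
    then have "has_biclique 1 t R C"
      unfolding has_biclique_def using that by (intro exI[of _ "{r}"]) auto
    then show False using assms(2) by simp
  qed
  have "{(r, c) \<in> R \<times> C. meets r c} = Sigma R (\<lambda>r. {c \<in> C. meets r c})" by auto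
  then have "crossings R C = (\<Sum>r\<in>R. card {c \<in> C. meets r c})"
    unfolding crossings_def using finite_rows finite_cols by (simp add: card_SigmaI)
  also have "\<dots> \<le> (\<Sum>r\<in>R. t)" using degree by (rule sum_mono)
  finally show ?thesis by (simp add: mult.commute)
qed

fun crossing_bound :: "nat \<Rightarrow> nat \<Rightarrow> nat" where
  "crossing_bound t 0 = t"
| "crossing_bound t (Suc a) = 7 * crossing_bound t a + 1"

lemma crossings_le_if_no_biclique:
  assumes "segment_family R C" "\<not> has_biclique (Suc a) t R C" "0 < t"
  shows "crossings R C \<le> crossing_bound t a * (card R + card C)"
  using assms(1,2)
proof (induction a arbitrary: R C)
  case 0
  then show ?case using crossings_le_if_no_star[of R C t] by (simp add: add_mult_distrib2)
next
  case (Suc a)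
  interpret segment_family R C by fact
  have "\<not> has_biclique (Suc a) t runs C" using biclique_from_runs assms(3) Suc.prems(2) by blast
  then have "crossings runs C \<le> crossing_bound t a * (card runs + card C)"
    using Suc.IH segment_family_runs by blast
  then have "crossings R C \<le> card C + crossing_bound t a * (card runs + card C)"
    using crossings_le_runs by linarith
  also have "\<dots> \<le> card C + crossing_bound t a * (7 * card R + 2 * card C)"
    using card_runs_le by simp
  also have "\<dots> \<le> crossing_bound t (Suc a) * (card R + card C)"
    by (simp add: algebra_simps)
  finally show ?case .
qed

definition row_seg :: "nat \<Rightarrow> (nat \<Rightarrow> nat \<Rightarrow> bool) \<Rightarrow> nat \<Rightarrow> seg" where
  "row_seg n M i = Seg i (Min {j. j < n \<and> M i j}) (Max {j. j < n \<and> M i j})"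

definition col_seg :: "nat \<Rightarrow> (nat \<Rightarrow> nat \<Rightarrow> bool) \<Rightarrow> nat \<Rightarrow> seg" where
  "col_seg n M j = Seg j (Min {i. i < n \<and> M i j}) (Max {i. i < n \<and> M i j})"

definition row_segs :: "nat \<Rightarrow> (nat \<Rightarrow> nat \<Rightarrow> bool) \<Rightarrow> seg set" where
  "row_segs n M = row_seg n M ` {i. i < n \<and> (\<exists>j<n. M i j)}"

definition col_segs :: "nat \<Rightarrow> (nat \<Rightarrow> nat \<Rightarrow> bool) \<Rightarrow> seg set" where
  "col_segs n M = col_seg n M ` {j. j < n \<and> (\<exists>i<n. M i j)}"

lemma pos_row_seg [simp]: "pos (row_seg n M i) = i"
  by (simp add: row_seg_def)

lemma pos_col_seg [simp]: "pos (col_seg n M j) = j"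
  by (simp add: col_seg_def)

lemma segment_family_matrix: "segment_family (row_segs n M) (col_segs n M)"
  by unfold_locales (auto simp: row_segs_def col_segs_def row_seg_def col_seg_def)

lemma card_row_segs_le: "card (row_segs n M) \<le> n"
proof -
  have "card (row_segs n M) \<le> card {i. i < n \<and> (\<exists>j<n. M i j)}"
    unfolding row_segs_def by (rule card_image_le) simp
  also have "\<dots> \<le> card {..<n}" by (rule card_mono) auto
  finally show ?thesis by simp
qed

lemma card_col_segs_le: "card (col_segs n M) \<le> n"
proof -
  have "card (col_segs n M) \<le> card {j. j < n \<and> (\<exists>i<n. M i j)}"
    unfolding col_segs_def by (rule card_image_le) simp
  also have "\<dots> \<le> card {..<n}" by (rule card_mono) auto
  finally show ?thesis by simp
qed

lemma meets_row_col_seg: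
  assumes "i < n" "j < n" "M i j"
  shows "meets (row_seg n M i) (col_seg n M j)"
  using assms by (auto simp: meets_def covers_def row_seg_def col_seg_def intro!: Min_le Max_ge)

lemma crosses_if_meets:
  assumes "i < n" "j < n" "\<exists>j<n. M i j" "\<exists>i<n. M i j" "meets (row_seg n M i) (col_seg n M j)"
  shows "crosses n M i j"
proof (cases "M i j")
  case False
  let ?J = "{j. j < n \<and> M i j}" and ?I = "{i. i < n \<and> M i j}"
  have "finite ?J" "?J \<noteq> {}" "finite ?I" "?I \<noteq> {}" using assms(3,4) by auto
  note ends = Min_in[OF this(1,2)] Max_in[OF this(1,2)] Min_in[OF this(3,4)] Max_in[OF this(3,4)]
  have "Min ?J \<le> j" "j \<le> Max ?J" "Min ?I \<le> i" "i \<le> Max ?I"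
    using assms(5) by (simp_all add: meets_def covers_def row_seg_def col_seg_def)
  moreover have "Min ?J \<noteq> j" "Max ?J \<noteq> j" "Min ?I \<noteq> i" "Max ?I \<noteq> i"
    using ends False by auto
  ultimately have "Min ?J < j" "j < Max ?J" "Min ?I < i" "i < Max ?I" by simp_all
  then show ?thesis
    unfolding crosses_def using ends
    by (intro disjI2 exI[of _ "Min ?I"] exI[of _ "Max ?I"] exI[of _ "Min ?J"] exI[of _ "Max ?J"]) auto
qed (simp add: crosses_def)

lemma ones_le_crossings: "ones n M \<le> crossings (row_segs n M) (col_segs n M)"
  unfolding ones_def crossings_def
proof (rule card_inj_on_le)
  show "inj_on (\<lambda>(i, j). (row_seg n M i, col_seg n M j)) {(i, j). i < n \<and> j < n \<and> M i j}"
    by (rule inj_onI) (auto simp: row_seg_def col_seg_def)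
  show "(\<lambda>(i, j). (row_seg n M i, col_seg n M j)) ` {(i, j). i < n \<and> j < n \<and> M i j}
      \<subseteq> {(r, c) \<in> row_segs n M \<times> col_segs n M. meets r c}"
    using meets_row_col_seg by (auto simp: row_segs_def col_segs_def)
  show "finite {(r, c) \<in> row_segs n M \<times> col_segs n M. meets r c}"
    using segment_family.finite_crossing_pairs[OF segment_family_matrix] .
qed

lemma crossing_grid_if_biclique:
  assumes "has_biclique a b (row_segs n M) (col_segs n M)"
  shows "\<exists>Rs Cs. Rs \<subseteq> {..<n} \<and> Cs \<subseteq> {..<n} \<and> card Rs = a \<and> card Cs = b \<and>
    (\<forall>i\<in>Rs. \<forall>j\<in>Cs. crosses n M i j)"
proof -
  obtain R' C' where R': "R' \<subseteq> row_segs n M" "card R' = a" and C': "C' \<subseteq> col_segs n M" "card C' = b"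
    and complete: "\<forall>r\<in>R'. \<forall>c\<in>C'. meets r c"
    using assms by (auto simp: has_biclique_def)
  have "inj_on pos (row_segs n M)" "inj_on pos (col_segs n M)"
    by (auto intro!: inj_onI simp: row_segs_def col_segs_def)
  then have "card (pos ` R') = a" "card (pos ` C') = b"
    using R' C' by (metis card_image inj_on_subset)+
  moreover have "pos ` R' \<subseteq> {..<n}" "pos ` C' \<subseteq> {..<n}"
    using R'(1) C'(1) by (auto simp: row_segs_def col_segs_def)
  moreover have "crosses n M i j" if ij: "i \<in> pos ` R'" "j \<in> pos ` C'" for i j
  proof -
    obtain r c where rc: "r \<in> R'" "c \<in> C'" "i = pos r" "j = pos c" using ij by blast
    obtain i' j' where i': "r = row_seg n M i'" "i' < n" "\<exists>j<n. M i' j"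
      and j': "c = col_seg n M j'" "j' < n" "\<exists>i<n. M i j'"
      using R'(1) C'(1) rc(1,2) unfolding row_segs_def col_segs_def by blast
    moreover have "i' = i" "j' = j" using rc(3,4) i'(1) j'(1) by simp_all
    moreover have "meets r c" using complete rc(1,2) by blast
    ultimately show ?thesis using crosses_if_meets by blast
  qed
  ultimately show ?thesis by (intro exI[of _ "pos ` R'"] exI[of _ "pos ` C'"]) simp
qed

theorem theorem3p1:
  fixes t :: nat
  assumes "t > 0"
  shows "\<exists>C :: real. \<forall>(n :: nat) (M :: nat \<Rightarrow> nat \<Rightarrow> bool).
    (\<nexists>R Cs. R \<subseteq> {..<n} \<and> Cs \<subseteq> {..<n} \<and> card R = t \<and> card Cs = t \<and>
        (\<forall>i\<in>R. \<forall>j\<in>Cs. crosses n M i j))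
    \<longrightarrow> real (ones n M) \<le> C * real n"
proof (intro exI allI impI)
  fix n :: nat and M :: "nat \<Rightarrow> nat \<Rightarrow> bool"
  assume no_grid: "\<nexists>R Cs. R \<subseteq> {..<n} \<and> Cs \<subseteq> {..<n} \<and> card R = t \<and> card Cs = t \<and>
    (\<forall>i\<in>R. \<forall>j\<in>Cs. crosses n M i j)"
  let ?b = "crossing_bound t (t - 1)"
  have "\<not> has_biclique t t (row_segs n M) (col_segs n M)"
    using crossing_grid_if_biclique no_grid by metis
  then have "crossings (row_segs n M) (col_segs n M) \<le> ?b * (card (row_segs n M) + card (col_segs n M))"
    using crossings_le_if_no_biclique[OF segment_family_matrix _ assms] assms by simp
  also have "\<dots> \<le> ?b * (2 * n)"
    using card_row_segs_le card_col_segs_le by (intro mult_le_mono2) (simp add: add_mono mult_2)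
  finally have "ones n M \<le> 2 * ?b * n" using ones_le_crossings[of n M] by linarith
  then show "real (ones n M) \<le> real (2 * ?b) * real n" by (metis of_nat_le_iff of_nat_mult)
qed

end
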